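(* Let $n,a,b$ be positive integers with $a<b$. Then $$\int_{a\pi/n}^{b\pi/n}\frac{\sin^2(nt)}{t}\,dt\ \ge\ \frac1{12}\sum_{i=a}^b\frac1i.$$ *)

theory Defs
  imports "HOL-Analysis.Analysis"
begin

end

theory Submission
  imports Defs
begin

(* Over each half period [k pi/n, (k+1) pi/n] the integral of sin(nt)^2 is pi/(2n), while 1/t is
   at least n/((k+1) pi); so that piece contributes at least 1/(2(k+1)).  Summing the pieces gives
   half the harmonic sum from a+1 to b, and this tail is at least a third of the full sum from a to b,
   because 1/a <= 2/(a+1). *)

lemma has_integral_sin_sq_half_period:
  fixes c x :: real
  assumes "0 < c"
  shows "((\<lambda>t. (sin (c * t))\<^sup>2) has_integral pi / (2 * c)) {x .. x + pi / c}"
proof -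
  define F where "F t = t / 2 - sin (2 * c * t) / (4 * c)" for t
  have "(F has_real_derivative (sin (c * t))\<^sup>2) (at t)" for t
  proof -
    have "(F has_real_derivative 1 / 2 - cos (2 * c * t) * (2 * c) / (4 * c)) (at t)"
      unfolding F_def by (auto intro!: derivative_eq_intros)
    moreover have "1 / 2 - cos (2 * c * t) * (2 * c) / (4 * c) = (sin (c * t))\<^sup>2"
      using assms cos_double_sin[of "c * t"] by (simp add: mult.assoc field_simps)
    ultimately show ?thesis
      by simp
  qed
  then have "((\<lambda>t. (sin (c * t))\<^sup>2) has_integral F (x + pi / c) - F x) {x .. x + pi / c}"
    using assms
    by (intro fundamental_theorem_of_calculus)
       (auto simp: has_real_derivative_iff_has_vector_derivative intro: has_vector_derivative_at_within)
  moreover have "sin (2 * c * (x + pi / c)) = sin (2 * c * x)"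
    using assms sin_periodic[of "2 * c * x"] by (simp add: algebra_simps)
  ultimately show ?thesis
    using assms by (simp add: F_def field_simps)
qed

lemma integral_divide_by_id_ge:
  fixes f :: "real \<Rightarrow> real"
  assumes "0 < x" and "continuous_on {x..y} f" and "\<And>t. t \<in> {x..y} \<Longrightarrow> 0 \<le> f t"
  shows "integral {x..y} f / y \<le> integral {x..y} (\<lambda>t. f t / t)"
proof -
  have "integral {x..y} f / y = integral {x..y} (\<lambda>t. f t / y)"
    by simp
  also have "\<dots> \<le> integral {x..y} (\<lambda>t. f t / t)"
  proof (rule integral_le)
    show "(\<lambda>t. f t / y) integrable_on {x..y}" "(\<lambda>t. f t / t) integrable_on {x..y}"
      using assms(1,2) by (auto intro!: integrable_continuous_interval continuous_intros)
    show "f t / y \<le> f t / t" if "t \<in> {x..y}" for t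
      using that assms(1) assms(3)[OF that] by (auto intro: divide_left_mono)
  qed
  finally show ?thesis .
qed

lemma integral_sin_sq_over_id_half_period_ge:
  fixes n k :: nat
  assumes "0 < n" and "0 < k"
  shows "1 / (2 * real (Suc k))
         \<le> integral {real k * pi / real n .. real (Suc k) * pi / real n} (\<lambda>t. (sin (real n * t))\<^sup>2 / t)"
proof -
  let ?S = "{real k * pi / real n .. real (Suc k) * pi / real n}"
  have "?S = {real k * pi / real n .. real k * pi / real n + pi / real n}"
    by (simp add: add_divide_distrib distrib_right)
  then have "integral ?S (\<lambda>t. (sin (real n * t))\<^sup>2) = pi / (2 * real n)"
    using has_integral_sin_sq_half_period[of "real n"] assms(1) by (simp add: integral_unique)
  moreover have "1 / (2 * real (Suc k)) = pi / (2 * real n) / (real (Suc k) * pi / real n)"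
    using assms(1) by simp
  ultimately have "1 / (2 * real (Suc k))
                   = integral ?S (\<lambda>t. (sin (real n * t))\<^sup>2) / (real (Suc k) * pi / real n)"
    by simp
  also have "\<dots> \<le> integral ?S (\<lambda>t. (sin (real n * t))\<^sup>2 / t)"
    using assms by (intro integral_divide_by_id_ge) (auto intro!: continuous_intros)
  finally show ?thesis .
qed

lemma integral_sin_sq_over_id_ge_harmonic:
  fixes n a b :: nat
  assumes "0 < n" and "0 < a" and "a \<le> b"
  shows "(1/2) * (\<Sum>i=Suc a..b. 1 / real i)
         \<le> integral {real a * pi / real n .. real b * pi / real n} (\<lambda>t. (sin (real n * t))\<^sup>2 / t)"
  using assms(3)
proof (induction b rule: dec_induct)
  case base
  then show ?case by simp
next
  case (step b)
  let ?f = "\<lambda>t. (sin (real n * t))\<^sup>2 / t"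
  let ?p = "\<lambda>m. real m * pi / real n"
  have "0 < ?p a"
    using assms(1,2) by simp
  then have "?f integrable_on {?p a .. ?p (Suc b)}"
    by (auto intro!: integrable_continuous_interval continuous_intros)
  moreover have "?p a \<le> ?p b" "?p b \<le> ?p (Suc b)"
    using step.hyps assms(1) by (auto intro!: divide_right_mono mult_right_mono)
  ultimately have "integral {?p a .. ?p b} ?f + integral {?p b .. ?p (Suc b)} ?f
                   = integral {?p a .. ?p (Suc b)} ?f"
    by (intro Henstock_Kurzweil_Integration.integral_combine)
  moreover have "(1/2) * (1 / real (Suc b)) \<le> integral {?p b .. ?p (Suc b)} ?f"
    using integral_sin_sq_over_id_half_period_ge assms step.hyps by simp
  moreover have "(\<Sum>i=Suc a..Suc b. 1 / real i) = (\<Sum>i=Suc a..b. 1 / real i) + 1 / real (Suc b)"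
    using step.hyps by simp
  ultimately show ?case
    using step.IH by linarith
qed

lemma harmonic_segment_le_three_tail:
  fixes a b :: nat
  assumes "0 < a" and "a < b"
  shows "(\<Sum>i=a..b. 1 / real i) \<le> 3 * (\<Sum>i=Suc a..b. 1 / real i)"
proof -
  have tail: "1 / real (Suc a) \<le> (\<Sum>i=Suc a..b. 1 / real i)"
    using assms(2) by (intro member_le_sum[where f = "\<lambda>i. 1 / real i"]) auto
  have "1 / real a \<le> 2 / real (Suc a)"
    using assms(1) by (simp add: field_simps)
  moreover have "(\<Sum>i=a..b. 1 / real i) = 1 / real a + (\<Sum>i=Suc a..b. 1 / real i)"
    using assms(2) by (simp add: sum.atLeast_Suc_atMost)
  ultimately show ?thesis
    using tail by simp
qed

theorem lemma5p7:
  fixes n a b :: nat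
  assumes "0 < n" and "0 < a" and "0 < b" and "a < b"
  shows "integral {real a * pi / real n .. real b * pi / real n}
           (\<lambda>t. (sin (real n * t))\<^sup>2 / t)
         \<ge> (1/12) * (\<Sum>i=a..b. 1 / real i)"
proof -
  have "0 \<le> (\<Sum>i=a..b. 1 / real i)"
    by (simp add: sum_nonneg)
  moreover have "(\<Sum>i=a..b. 1 / real i) \<le> 3 * (\<Sum>i=Suc a..b. 1 / real i)"
    using harmonic_segment_le_three_tail assms(2,4) .
  moreover have "(1/2) * (\<Sum>i=Suc a..b. 1 / real i)
                 \<le> integral {real a * pi / real n .. real b * pi / real n} (\<lambda>t. (sin (real n * t))\<^sup>2 / t)"
    using integral_sin_sq_over_id_ge_harmonic assms(1,2,4) by simp
  ultimately show ?thesis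
    by linarith
qed

end
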